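(* Let $k \in \mathbb{N}$, let $G_1, \ldots, G_k$ be ordered graphs, and let $G = G_1 + \ldots + G_k$. Suppose that for each $i \in [k]$ there is an integer $m(i)$ such that $G_i$ has at least two distinct irreducible induced ordered subgraphs on $m(i)$ vertices. Then $S_n(G) \geqslant 2^{n-1}$ for each $n \leqslant k$.
   Context: Ordered graphs of order $n$ have vertex set $[n]$ with the natural order; distinct means non-isomorphic as ordered graphs. A pair of vertices $u<v$ separates the edges of $G$ if every edge $ij$ ($i<j$) has $j\leqslant u$ or $v\leqslant i$; $G$ is irreducible if no pair separates its edges. For ordered graphs $G_1,\dots,G_k$, $G_1+\dots+G_k$ is the ordered graph obtained by placing copies of $G_1,\dots,G_k$ consecutively from left to right with no edges between different copies. $S_n(G)$ is the number of distinct induced ordered subgraphs of $G$ of order $n$. *)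

theory Defs
  imports Complex_Main
begin

text \<open>An ordered graph of order n on vertex set {1..n} with the natural order is
  represented by the pair (n, E), where E is a set of pairs (i,j) with 1 <= i < j <= n
  (edge ij with i<j). Two ordered graphs are isomorphic as ordered graphs iff they are
  equal in this representation (the only order-preserving bijection is the identity).\<close>

type_synonym ograph = "nat \<times> (nat \<times> nat) set"

definition ord_graph :: "ograph \<Rightarrow> bool" where
  "ord_graph G \<longleftrightarrow> snd G \<subseteq> {(i, j). 1 \<le> i \<and> i < j \<and> j \<le> fst G}"

definition induced_sub :: "ograph \<Rightarrow> nat set \<Rightarrow> ograph" where
  "induced_sub G S =
     (let f = (\<lambda>a. sorted_list_of_set S ! (a - 1))
      in (card S, {(a, b). 1 \<le> a \<and> a < b \<and> b \<le> card S \<and> (f a, f b) \<in> snd G}))"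

definition induced_subs :: "ograph \<Rightarrow> nat \<Rightarrow> ograph set" where
  "induced_subs G m = {induced_sub G S | S. S \<subseteq> {1..fst G} \<and> card S = m}"

definition S_num :: "nat \<Rightarrow> ograph \<Rightarrow> nat" where
  "S_num m G = card (induced_subs G m)"

definition separates :: "ograph \<Rightarrow> nat \<Rightarrow> nat \<Rightarrow> bool" where
  "separates G u v \<longleftrightarrow> (\<forall>(i, j) \<in> snd G. j \<le> u \<or> v \<le> i)"

definition irreducible_og :: "ograph \<Rightarrow> bool" where
  "irreducible_og G \<longleftrightarrow>
     \<not> (\<exists>u v. 1 \<le> u \<and> u < v \<and> v \<le> fst G \<and> separates G u v)"

definition osum :: "ograph \<Rightarrow> ograph \<Rightarrow> ograph" where
  "osum G H = (fst G + fst H,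
     snd G \<union> {(i + fst G, j + fst G) | i j. (i, j) \<in> snd H})"

definition osum_list :: "ograph list \<Rightarrow> ograph" where
  "osum_list Gs = foldr osum Gs (0, {})"

end

theory Submission
  imports Defs
begin

(*
  No edge of P + Y crosses the gap after P, while every inner gap of an irreducible graph is
  crossed by an edge; so P + Y determines P and Y when P is irreducible of positive order.
  For G = G_1 + G' the map (P, Y) |-> P + Y is therefore injective on pairs of an irreducible
  induced subgraph P of G_1 of order j >= 1 and an induced subgraph Y of G' of order n - j, and
  S_n(G) >= sum_j c_j S_(n-j)(G'), where c_j counts the irreducible induced subgraphs of G_1 of
  order j. Deleting a suitable vertex keeps a graph irreducible (a vertex avoided by a minimal
  set of edges crossing all gaps, or else the last vertex), so c_j >= 1 for j <= m(1) and
  c_m(1) >= 2. Induction on k and a geometric sum then give S_n(G) >= 2^(n-1).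
*)

section \<open>Induced subgraphs as order embeddings\<close>

definition ord_embedding :: "nat \<Rightarrow> nat \<Rightarrow> (nat \<Rightarrow> nat) \<Rightarrow> bool" where
  "ord_embedding m N f \<longleftrightarrow> strict_mono_on {1..m} f \<and> f ` {1..m} \<subseteq> {1..N}"

definition induced_along :: "ograph \<Rightarrow> (nat \<Rightarrow> nat) \<Rightarrow> nat \<Rightarrow> ograph" where
  "induced_along G f m = (m, {(a, b). 1 \<le> a \<and> a < b \<and> b \<le> m \<and> (f a, f b) \<in> snd G})"

lemma ord_embedding_range:
  "ord_embedding m N f \<Longrightarrow> 1 \<le> a \<Longrightarrow> a \<le> m \<Longrightarrow> 1 \<le> f a \<and> f a \<le> N"
  unfolding ord_embedding_def by (meson atLeastAtMost_iff image_subset_iff)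

lemma fst_induced_along [simp]: "fst (induced_along G f m) = m"
  by (simp add: induced_along_def)

lemma ord_graph_induced_along: "ord_graph (induced_along G f m)"
  unfolding ord_graph_def induced_along_def by auto

lemma induced_sub_eq_induced_along:
  assumes "S \<subseteq> {1..N}"
  shows "ord_embedding (card S) N (\<lambda>a. sorted_list_of_set S ! (a - 1))"
    and "induced_sub G S = induced_along G (\<lambda>a. sorted_list_of_set S ! (a - 1)) (card S)"
proof -
  have "finite S" using assms finite_subset by blast
  then have len: "length (sorted_list_of_set S) = card S"
    and set: "set (sorted_list_of_set S) = S" by simp_all
  show "ord_embedding (card S) N (\<lambda>a. sorted_list_of_set S ! (a - 1))"
    unfolding ord_embedding_def
  proof (intro conjI strict_mono_onI image_subsetI)
    fix a b assume "a \<in> {1..card S}" "b \<in> {1..card S}" "a < b"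
    then have "a - 1 < b - 1" "b - 1 < length (sorted_list_of_set S)" using len by auto
    then show "sorted_list_of_set S ! (a - 1) < sorted_list_of_set S ! (b - 1)"
      using sorted_wrt_nth_less[OF strict_sorted_list_of_set] by blast
  next
    fix a assume "a \<in> {1..card S}"
    then have "a - 1 < length (sorted_list_of_set S)" using len by auto
    then have "sorted_list_of_set S ! (a - 1) \<in> S" using set nth_mem by blast
    then show "sorted_list_of_set S ! (a - 1) \<in> {1..N}" using assms by blast
  qed
  show "induced_sub G S = induced_along G (\<lambda>a. sorted_list_of_set S ! (a - 1)) (card S)"
    by (simp add: induced_sub_def induced_along_def)
qed

lemma induced_along_in_induced_subs:
  assumes "ord_embedding m (fst G) f"
  shows "induced_along G f m \<in> induced_subs G m"
proof -
  define xs where "xs = map f [1..<Suc m]"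
  have sorted: "sorted_wrt (<) xs"
    using assms unfolding xs_def sorted_wrt_iff_nth_less ord_embedding_def strict_mono_on_def
    by (simp del: upt_Suc add: nth_upt)
  have len: "length xs = m" by (simp add: xs_def)
  have card: "card (set xs) = m"
    using distinct_card sorted strict_sorted_iff len by metis
  have sub: "set xs \<subseteq> {1..fst G}"
    using assms unfolding ord_embedding_def xs_def by auto
  have "sorted_list_of_set (set xs) = xs"
    using sorted_list_of_set_unique sorted card len by auto
  moreover have "xs ! (a - 1) = f a" if "1 \<le> a" "a \<le> m" for a
    using that unfolding xs_def by (simp del: upt_Suc add: nth_upt)
  ultimately have "induced_sub G (set xs) = induced_along G f m"
    unfolding induced_sub_def induced_along_def Let_def card by auto
  then show ?thesis unfolding induced_subs_def using sub card by (metis (mono_tags, lifting) mem_Collect_eq)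
qed

lemma induced_subs_iff:
  "H \<in> induced_subs G m \<longleftrightarrow> (\<exists>f. ord_embedding m (fst G) f \<and> H = induced_along G f m)"
proof
  assume "H \<in> induced_subs G m"
  then obtain S where S: "S \<subseteq> {1..fst G}" "card S = m" "H = induced_sub G S"
    unfolding induced_subs_def by blast
  then show "\<exists>f. ord_embedding m (fst G) f \<and> H = induced_along G f m"
    using induced_sub_eq_induced_along[OF S(1)] by metis
qed (use induced_along_in_induced_subs in blast)

lemma induced_subs_ord_graph:
  "H \<in> induced_subs G m \<Longrightarrow> ord_graph H \<and> fst H = m"
  using induced_subs_iff ord_graph_induced_along by fastforce

lemma induced_subs_trans:
  assumes "H \<in> induced_subs G a" "K \<in> induced_subs H b"
  shows "K \<in> induced_subs G b"
proof -
  obtain f where f: "ord_embedding a (fst G) f" "H = induced_along G f a"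
    using assms(1) induced_subs_iff by blast
  obtain g where g: "ord_embedding b a g" "K = induced_along H g b"
    using assms(2) induced_subs_iff f(2) by auto
  have g_range: "1 \<le> g x \<and> g x \<le> a" if "1 \<le> x" "x \<le> b" for x
    using ord_embedding_range[OF g(1)] that by blast
  have "ord_embedding b (fst G) (f \<circ> g)"
    using f(1) g(1) monotone_on_o[of "{1..a}" "(<)" "(<)" f "{1..b}" "(<)" g]
    unfolding ord_embedding_def by (auto simp: image_comp[symmetric] intro: image_mono)
  moreover have "K = induced_along G (f \<circ> g) b"
    using g_range g(1) unfolding g(2) f(2) induced_along_def ord_embedding_def strict_mono_on_def
    by auto
  ultimately show ?thesis using induced_subs_iff by blast
qed

lemma induced_subs_refl:
  assumes "ord_graph H" shows "H \<in> induced_subs H (fst H)"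
proof -
  have "ord_embedding (fst H) (fst H) id" by (simp add: ord_embedding_def strict_mono_on_def)
  moreover have "induced_along H id (fst H) = H"
    using assms unfolding induced_along_def ord_graph_def by (cases H) auto
  ultimately show ?thesis using induced_subs_iff by metis
qed

lemma finite_induced_subs: "finite (induced_subs G m)"
proof -
  have "induced_subs G m \<subseteq> induced_sub G ` Pow {1..fst G}"
    unfolding induced_subs_def by blast
  then show ?thesis by (rule finite_subset) simp
qed

lemma induced_subs_0: "induced_subs G 0 = {(0, {})}"
proof -
  have "S \<subseteq> {1..fst G} \<and> card S = 0 \<longleftrightarrow> S = {}" for S
    using finite_subset[of S "{1..fst G}"] by auto
  then show ?thesis unfolding induced_subs_def induced_sub_def by auto
qed

section \<open>Irreducible induced subgraphs of every order\<close>

definition covers :: "nat \<Rightarrow> (nat \<times> nat) set \<Rightarrow> bool" where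
  "covers N E \<longleftrightarrow> (\<forall>u. 1 \<le> u \<and> u < N \<longrightarrow> (\<exists>(i, j)\<in>E. i \<le> u \<and> u < j))"

lemma covers_mono: "covers N E \<Longrightarrow> E \<subseteq> F \<Longrightarrow> covers N F"
  unfolding covers_def by blast

lemma irreducible_og_iff_covers: "irreducible_og G \<longleftrightarrow> covers (fst G) (snd G)"
proof
  assume irr: "irreducible_og G"
  show "covers (fst G) (snd G)"
    unfolding covers_def
  proof (intro allI impI)
    fix u assume u: "1 \<le> u \<and> u < fst G"
    then have "\<not> separates G u (Suc u)" using irr unfolding irreducible_og_def by auto
    then show "\<exists>(i, j)\<in>snd G. i \<le> u \<and> u < j" unfolding separates_def by fastforce
  qed
next
  assume cov: "covers (fst G) (snd G)"
  show "irreducible_og G"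
    unfolding irreducible_og_def
  proof
    assume "\<exists>u v. 1 \<le> u \<and> u < v \<and> v \<le> fst G \<and> separates G u v"
    then obtain u v where uv: "1 \<le> u" "u < v" "v \<le> fst G" "separates G u v" by blast
    then obtain i j where "(i, j) \<in> snd G" "i \<le> u" "u < j" using cov unfolding covers_def by fastforce
    then show False using uv unfolding separates_def by fastforce
  qed
qed

definition skip :: "nat \<Rightarrow> nat \<Rightarrow> nat" where
  "skip v a = (if a < v then a else Suc a)"

lemma ord_embedding_skip: "ord_embedding m (Suc m) (skip v)"
  unfolding ord_embedding_def skip_def by (auto intro!: strict_mono_onI)

lemma ord_embedding_id: "m \<le> N \<Longrightarrow> ord_embedding m N id"
  unfolding ord_embedding_def by (auto intro!: strict_mono_onI)

lemma irreducible_delete_vertex: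
  assumes H: "ord_graph H" "fst H = Suc m" and v: "1 \<le> v" "v \<le> Suc m"
    and cov: "covers (Suc m) {(i, j) \<in> snd H. i \<noteq> v \<and> j \<noteq> v}"
  shows "irreducible_og (induced_along H (skip v) m)"
  unfolding irreducible_og_iff_covers fst_induced_along covers_def
proof (intro allI impI)
  fix u assume u: "1 \<le> u \<and> u < m"
  \<comment> \<open>gap u of the smaller graph lies just below skip v (Suc u) in H; an edge avoiding v
    across that gap spans the images of u and Suc u\<close>
  define x where "x = skip v (Suc u) - 1"
  have "1 \<le> x" "x < Suc m" using u unfolding x_def skip_def by auto
  then obtain i j where ij: "(i, j) \<in> snd H" "i \<noteq> v" "j \<noteq> v" "i \<le> x" "x < j"
    using cov unfolding covers_def by blast
  have "1 \<le> i" "i < j" "j \<le> Suc m" using ij(1) H unfolding ord_graph_def by auto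
  define unskip where "unskip a = (if a < v then a else a - 1)" for a
  have "skip v (unskip i) = i" "skip v (unskip j) = j"
    using ij(2,3) unfolding skip_def unskip_def by auto
  moreover have "1 \<le> unskip i" "unskip i < unskip j" "unskip j \<le> m"
      "unskip i \<le> u" "u < unskip j"
    using \<open>1 \<le> i\<close> \<open>i < j\<close> \<open>j \<le> Suc m\<close> ij(2-5) v u
    unfolding unskip_def x_def skip_def by (auto split: if_splits)
  ultimately have "(unskip i, unskip j) \<in> snd (induced_along H (skip v) m)"
    using ij(1) unfolding induced_along_def by auto
  then show "\<exists>(a, b)\<in>snd (induced_along H (skip v) m). a \<le> u \<and> u < b"
    using \<open>unskip i \<le> u\<close> \<open>u < unskip j\<close> by blast
qed

lemma irreducible_delete_last:
  assumes "ord_graph H" "covers m {(i, j) \<in> snd H. j \<le> m}"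
  shows "irreducible_og (induced_along H id m)"
  unfolding irreducible_og_iff_covers fst_induced_along covers_def
proof (intro allI impI)
  fix u assume "1 \<le> u \<and> u < m"
  then obtain i j where ij: "(i, j) \<in> snd H" "j \<le> m" "i \<le> u" "u < j"
    using assms(2) unfolding covers_def by blast
  moreover have "1 \<le> i" "i < j" using ij(1) assms(1) unfolding ord_graph_def by auto
  ultimately have "(i, j) \<in> snd (induced_along H id m)" unfolding induced_along_def by auto
  then show "\<exists>(a, b)\<in>snd (induced_along H id m). a \<le> u \<and> u < b" using ij by blast
qed

lemma minimal_cover_exists:
  assumes "finite E" "covers N E"
  obtains C where "C \<subseteq> E" "covers N C" "\<And>e. e \<in> C \<Longrightarrow> \<not> covers N (C - {e})"
proof -
  obtain C where C: "C \<subseteq> E" "covers N C"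
    and least: "\<And>C'. C' \<subseteq> E \<and> covers N C' \<Longrightarrow> card C \<le> card C'"
    using ex_has_least_nat[of "\<lambda>C. C \<subseteq> E \<and> covers N C" E card] assms(2) by blast
  have "finite C" using C(1) assms(1) finite_subset by blast
  have "\<not> covers N (C - {e})" if "e \<in> C" for e
  proof
    assume "covers N (C - {e})"
    then have "card C \<le> card (C - {e})" using least C(1) by blast
    moreover have "card (C - {e}) < card C" using \<open>finite C\<close> that by (rule card_Diff1_less)
    ultimately show False by simp
  qed
  then show ?thesis using that C by blast
qed

text \<open>By minimality every edge of C crosses a gap crossed by no other edge of C. If m is an
  endpoint of some edge of C, an edge (a, Suc m) crossing an earlier gap would also cross that
  private gap; so the edges ending at Suc m are needed for the last gap only.\<close>

lemma minimal_cover_drop_last: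
  assumes C: "C \<subseteq> {(i, j). 1 \<le> i \<and> i < j \<and> j \<le> Suc m}" "covers (Suc m) C"
    and minimal: "\<And>e. e \<in> C \<Longrightarrow> \<not> covers (Suc m) (C - {e})"
    and uses_m: "\<exists>(i, j)\<in>C. i = m \<or> j = m"
  shows "covers m {(i, j) \<in> C. j \<le> m}"
  unfolding covers_def
proof (intro allI impI, rule ccontr)
  fix u assume u: "1 \<le> u \<and> u < m"
    and not_crossed: "\<not> (\<exists>(i, j)\<in>{(i, j) \<in> C. j \<le> m}. i \<le> u \<and> u < j)"
  have ends_last: "j = Suc m" if "(i, j) \<in> C" "i \<le> u" "u < j" for i j
  proof -
    have "j \<le> Suc m" using that(1) C(1) by auto
    moreover have "\<not> j \<le> m" using not_crossed that by blast
    ultimately show ?thesis by simp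
  qed
  have "1 \<le> u" "u < Suc m" using u by auto
  then obtain a b where "(a, b) \<in> C" "a \<le> u" "u < b" using C(2) unfolding covers_def by blast
  then have a: "(a, Suc m) \<in> C" "a \<le> u" using ends_last by auto
  obtain i j where ij: "(i, j) \<in> C" "i = m \<or> j = m" using uses_m by blast
  have "u < i"
  proof (rule ccontr)
    assume "\<not> u < i"
    moreover have "i \<noteq> m" using calculation u by auto
    ultimately have "j = m" "j = Suc m" using ij ends_last[OF ij(1)] u by auto
    then show False by simp
  qed
  obtain w where w: "1 \<le> w" "w < Suc m" "\<not> (\<exists>(i', j')\<in>C - {(i, j)}. i' \<le> w \<and> w < j')"
    using minimal[OF ij(1)] unfolding covers_def by blast
  obtain i' j' where "(i', j') \<in> C" "i' \<le> w" "w < j'"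
    using C(2) w(1,2) unfolding covers_def by blast
  then have "i \<le> w" using w(3) by blast
  have "(a, Suc m) \<in> C - {(i, j)}" using a \<open>u < i\<close> by auto
  then have "\<not> (a \<le> w \<and> w < Suc m)" using w(3) by blast
  then show False using w(2) a(2) \<open>u < i\<close> \<open>i \<le> w\<close> by simp
qed

lemma irreducible_delete_one:
  assumes H: "ord_graph H" "irreducible_og H" "fst H = Suc m"
  shows "\<exists>K\<in>induced_subs H m. irreducible_og K"
proof -
  have edges: "snd H \<subseteq> {(i, j). 1 \<le> i \<and> i < j \<and> j \<le> Suc m}"
    using H(1,3) unfolding ord_graph_def by simp
  then have "finite (snd H)"
    by (rule finite_subset) (auto intro: finite_subset[of _ "{1..Suc m} \<times> {1..Suc m}"])
  then obtain C where C: "C \<subseteq> snd H" "covers (Suc m) C"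
    and minimal: "\<And>e. e \<in> C \<Longrightarrow> \<not> covers (Suc m) (C - {e})"
    using minimal_cover_exists H(2,3) unfolding irreducible_og_iff_covers by metis
  show ?thesis
  proof (cases "\<exists>v\<in>{1..Suc m}. \<forall>(i, j)\<in>C. i \<noteq> v \<and> j \<noteq> v")
    case True
    then obtain v where v: "1 \<le> v" "v \<le> Suc m" "\<forall>(i, j)\<in>C. i \<noteq> v \<and> j \<noteq> v" by auto
    have "C \<subseteq> {(i, j) \<in> snd H. i \<noteq> v \<and> j \<noteq> v}" using C(1) v(3) by auto
    then have "irreducible_og (induced_along H (skip v) m)"
      using irreducible_delete_vertex[OF H(1,3) v(1,2)] covers_mono[OF C(2)] by blast
    moreover have "induced_along H (skip v) m \<in> induced_subs H m"
      by (rule induced_along_in_induced_subs) (simp add: H(3) ord_embedding_skip)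
    ultimately show ?thesis by blast
  next
    case False
    then have uses: "\<exists>(i, j)\<in>C. i = v \<or> j = v" if "1 \<le> v" "v \<le> Suc m" for v
      using that by fastforce
    obtain i j where "(i, j) \<in> C" using uses[of "Suc m"] by auto
    then have "1 \<le> m" using C(1) edges by auto
    then have "covers m {(i, j) \<in> C. j \<le> m}"
      using minimal_cover_drop_last[OF order_trans[OF C(1) edges] C(2) minimal] uses by simp
    moreover have "{(i, j) \<in> C. j \<le> m} \<subseteq> {(i, j) \<in> snd H. j \<le> m}" using C(1) by auto
    ultimately have "irreducible_og (induced_along H id m)"
      using irreducible_delete_last[OF H(1) covers_mono] by blast
    moreover have "induced_along H id m \<in> induced_subs H m"
      by (rule induced_along_in_induced_subs) (simp add: H(3) ord_embedding_id)
    ultimately show ?thesis by blast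
  qed
qed

lemma irreducible_induced_subs_all_orders:
  assumes "ord_graph H" "irreducible_og H" "j \<le> fst H"
  shows "\<exists>K\<in>induced_subs H j. irreducible_og K"
proof -
  obtain d where "fst H = j + d" using assms(3) le_Suc_ex by blast
  then show ?thesis
    using assms(1,2)
  proof (induction d arbitrary: H)
    case 0
    then show ?case using induced_subs_refl[OF 0(2)] by auto
  next
    case (Suc d)
    obtain K1 where K1: "K1 \<in> induced_subs H (j + d)" "irreducible_og K1"
      using irreducible_delete_one[of H "j + d"] Suc.prems by auto
    then obtain K where "K \<in> induced_subs K1 j" "irreducible_og K"
      using Suc.IH[of K1] induced_subs_ord_graph[OF K1(1)] K1(2) by blast
    then show ?case using induced_subs_trans[OF K1(1)] by blast
  qed
qed

section \<open>Sums of ordered graphs\<close>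

lemma ord_embedding_join:
  assumes f: "ord_embedding j M f" and g: "ord_embedding l N g"
  shows "ord_embedding (j + l) (M + N) (\<lambda>a. if a \<le> j then f a else g (a - j) + M)"
  unfolding ord_embedding_def
proof (intro conjI strict_mono_onI image_subsetI)
  fix a b assume ab: "a \<in> {1..j + l}" "b \<in> {1..j + l}" "a < b"
  consider "b \<le> j" | "a \<le> j" "j < b" | "j < a" using ab(3) by linarith
  then show "(if a \<le> j then f a else g (a - j) + M) < (if b \<le> j then f b else g (b - j) + M)"
  proof cases
    case 1
    then show ?thesis using ab f unfolding ord_embedding_def strict_mono_on_def by auto
  next
    case 2
    then have "1 \<le> b - j" "b - j \<le> l" using ab by auto
    then show ?thesis using 2 ab ord_embedding_range[OF f, of a] ord_embedding_range[OF g, of "b - j"]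
      by auto
  next
    case 3
    then have "a - j \<in> {1..l}" "b - j \<in> {1..l}" "a - j < b - j" using ab by auto
    then have "g (a - j) < g (b - j)"
      using g unfolding ord_embedding_def by (blast dest: strict_mono_onD)
    then show ?thesis using 3 ab by auto
  qed
next
  fix a assume a: "a \<in> {1..j + l}"
  show "(if a \<le> j then f a else g (a - j) + M) \<in> {1..M + N}"
  proof (cases "a \<le> j")
    case True
    then show ?thesis using a ord_embedding_range[OF f, of a] by auto
  next
    case False
    then have "1 \<le> a - j" "a - j \<le> l" using a by auto
    then show ?thesis using False ord_embedding_range[OF g, of "a - j"] by auto
  qed
qed

lemma osum_edge_iff:
  assumes "ord_graph G" "ord_graph H"
  shows "(i, j) \<in> snd (osum G H) \<longleftrightarrow>
    (j \<le> fst G \<and> (i, j) \<in> snd G) \<or> (fst G < i \<and> (i - fst G, j - fst G) \<in> snd H)"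
proof
  assume "(i, j) \<in> snd (osum G H)"
  then show "(j \<le> fst G \<and> (i, j) \<in> snd G) \<or> (fst G < i \<and> (i - fst G, j - fst G) \<in> snd H)"
    using assms unfolding osum_def ord_graph_def by auto
next
  assume "(j \<le> fst G \<and> (i, j) \<in> snd G) \<or> (fst G < i \<and> (i - fst G, j - fst G) \<in> snd H)"
  then consider "(i, j) \<in> snd G" | "fst G < i" "(i - fst G, j - fst G) \<in> snd H" by blast
  then show "(i, j) \<in> snd (osum G H)"
  proof cases
    case 1
    then show ?thesis unfolding osum_def by simp
  next
    case 2
    then have "i - fst G < j - fst G" using assms(2) unfolding ord_graph_def by auto
    then have "(i, j) = (i - fst G + fst G, j - fst G + fst G)" using 2(1) by auto
    then show ?thesis using 2(2) unfolding osum_def snd_conv by blast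
  qed
qed

lemma fst_osum [simp]: "fst (osum G H) = fst G + fst H"
  by (simp add: osum_def)

lemma ord_graph_osum: "ord_graph G \<Longrightarrow> ord_graph H \<Longrightarrow> ord_graph (osum G H)"
  unfolding ord_graph_def osum_def by auto

lemma ord_graph_osum_list: "\<forall>G\<in>set Gs. ord_graph G \<Longrightarrow> ord_graph (osum_list Gs)"
proof (induction Gs)
  case Nil
  then show ?case by (simp add: osum_list_def ord_graph_def)
next
  case (Cons G Gs)
  then show ?case by (simp add: osum_list_def ord_graph_osum)
qed

lemma osum_induced_along:
  assumes G1: "ord_graph G1" and G2: "ord_graph G2"
    and f: "ord_embedding j (fst G1) f" and g: "ord_embedding l (fst G2) g"
  shows "osum (induced_along G1 f j) (induced_along G2 g l) =
    induced_along (osum G1 G2) (\<lambda>a. if a \<le> j then f a else g (a - j) + fst G1) (j + l)"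
    (is "osum ?P ?Y = induced_along _ ?h _")
proof -
  have "(a, b) \<in> snd (osum ?P ?Y) \<longleftrightarrow> (a, b) \<in> snd (induced_along (osum G1 G2) ?h (j + l))"
    for a b
  proof -
    have f_range: "1 \<le> f x \<and> f x \<le> fst G1" if "1 \<le> x" "x \<le> j" for x
      using ord_embedding_range[OF f] that by blast
    have g_range: "1 \<le> g x" if "1 \<le> x" "x \<le> l" for x
      using ord_embedding_range[OF g] that by blast
    have lhs: "(a, b) \<in> snd (osum ?P ?Y) \<longleftrightarrow>
      (1 \<le> a \<and> a < b \<and> b \<le> j \<and> (f a, f b) \<in> snd G1) \<or>
      (j < a \<and> b \<le> j + l \<and> a < b \<and> (g (a - j), g (b - j)) \<in> snd G2)"
      unfolding osum_edge_iff[OF ord_graph_induced_along ord_graph_induced_along]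
      by (auto simp: induced_along_def)
    have rhs: "(a, b) \<in> snd (induced_along (osum G1 G2) ?h (j + l)) \<longleftrightarrow>
      1 \<le> a \<and> a < b \<and> b \<le> j + l \<and>
      ((?h b \<le> fst G1 \<and> (?h a, ?h b) \<in> snd G1) \<or>
       (fst G1 < ?h a \<and> (?h a - fst G1, ?h b - fst G1) \<in> snd G2))"
      unfolding induced_along_def osum_edge_iff[OF G1 G2] by simp
    consider "b \<le> j" | "a \<le> j" "j < b" | "j < a" by linarith
    then show ?thesis
    proof cases
      case 1
      then show ?thesis unfolding lhs rhs using f_range[of a] f_range[of b] by auto
    next
      case 2
      have "fst G1 < ?h b" if "b \<le> j + l"
      proof -
        have "1 \<le> b - j" "b - j \<le> l" using 2 that by auto
        then have "1 \<le> g (b - j)" using g_range by blast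
        then show ?thesis using 2 by simp
      qed
      moreover have "?h a \<le> fst G1" if "1 \<le> a" using 2 that f_range[of a] by auto
      ultimately show ?thesis unfolding lhs rhs using 2 by auto
    next
      case 3
      have "1 \<le> g (a - j) \<and> 1 \<le> g (b - j)" if "a < b" "b \<le> j + l"
      proof -
        have "1 \<le> a - j" "a - j \<le> l" "1 \<le> b - j" "b - j \<le> l" using 3 that by auto
        then show ?thesis using g_range by blast
      qed
      then show ?thesis unfolding lhs rhs using 3 by auto
    qed
  qed
  then show ?thesis unfolding prod_eq_iff set_eq_iff split_paired_All by simp
qed

lemma osum_in_induced_subs:
  assumes "ord_graph G1" "ord_graph G2" "P \<in> induced_subs G1 j" "Y \<in> induced_subs G2 l"
  shows "osum P Y \<in> induced_subs (osum G1 G2) (j + l)"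
proof -
  obtain f where f: "ord_embedding j (fst G1) f" "P = induced_along G1 f j"
    using assms(3) induced_subs_iff by blast
  obtain g where g: "ord_embedding l (fst G2) g" "Y = induced_along G2 g l"
    using assms(4) induced_subs_iff by blast
  show ?thesis
    unfolding f(2) g(2) osum_induced_along[OF assms(1,2) f(1) g(1)]
    using induced_along_in_induced_subs ord_embedding_join[OF f(1) g(1)] by simp
qed

lemma osum_edges_left:
  assumes "ord_graph P" "ord_graph Y"
  shows "(a, b) \<in> snd P \<longleftrightarrow> (a, b) \<in> snd (osum P Y) \<and> b \<le> fst P"
proof -
  have "(a - fst P, b - fst P) \<notin> snd Y" if "b \<le> fst P"
    using that assms(2) unfolding ord_graph_def by auto
  moreover have "b \<le> fst P" if "(a, b) \<in> snd P"
    using that assms(1) unfolding ord_graph_def by auto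
  ultimately show ?thesis using osum_edge_iff[OF assms] by blast
qed

lemma osum_edges_right:
  assumes "ord_graph P" "ord_graph Y"
  shows "(a, b) \<in> snd Y \<longleftrightarrow> (a + fst P, b + fst P) \<in> snd (osum P Y)"
proof -
  have "(a + fst P, b + fst P) \<notin> snd P"
    using assms(1) unfolding ord_graph_def by auto
  moreover have "1 \<le> a" if "(a, b) \<in> snd Y"
    using that assms(2) unfolding ord_graph_def by auto
  ultimately show ?thesis using osum_edge_iff[OF assms] by auto
qed

lemma osum_irreducible_order_le:
  assumes "irreducible_og P" "ord_graph P'" "ord_graph Y'" "1 \<le> fst P'"
    and eq: "osum P Y = osum P' Y'"
  shows "fst P \<le> fst P'"
proof (rule ccontr)
  assume "\<not> fst P \<le> fst P'"
  then obtain i j where ij: "(i, j) \<in> snd P" "i \<le> fst P'" "fst P' < j"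
    using assms(1,4) unfolding irreducible_og_iff_covers covers_def by fastforce
  then have "(i, j) \<in> snd (osum P Y)" unfolding osum_def by simp
  then have "j \<le> fst P' \<or> fst P' < i" using eq osum_edge_iff[OF assms(2,3)] by auto
  then show False using ij(2,3) by simp
qed

lemma inj_on_osum_irreducible:
  "inj_on (\<lambda>(P, Y). osum P Y) {(P, Y). ord_graph P \<and> ord_graph Y \<and> irreducible_og P \<and> 1 \<le> fst P}"
proof (rule inj_onI)
  fix x x'
  assume "x \<in> {(P, Y). ord_graph P \<and> ord_graph Y \<and> irreducible_og P \<and> 1 \<le> fst P}"
    "x' \<in> {(P, Y). ord_graph P \<and> ord_graph Y \<and> irreducible_og P \<and> 1 \<le> fst P}"
    "(\<lambda>(P, Y). osum P Y) x = (\<lambda>(P, Y). osum P Y) x'"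
  moreover obtain P Y P' Y' where x: "x = (P, Y)" "x' = (P', Y')" by (metis prod.exhaust)
  ultimately have P: "ord_graph P" "ord_graph Y" "irreducible_og P" "1 \<le> fst P"
    and P': "ord_graph P'" "ord_graph Y'" "irreducible_og P'" "1 \<le> fst P'"
    and eq: "osum P Y = osum P' Y'" by auto
  have "fst P = fst P'"
    using osum_irreducible_order_le[OF P(3) P'(1,2,4) eq]
      osum_irreducible_order_le[OF P'(3) P(1,2,4) eq[symmetric]] by simp
  moreover have "snd P = snd P'"
    using osum_edges_left[OF P(1,2)] osum_edges_left[OF P'(1,2)] eq calculation by auto
  moreover have "fst Y = fst Y'" using eq calculation by (metis add_left_cancel fst_osum)
  moreover have "snd Y = snd Y'"
    using osum_edges_right[OF P(1,2)] osum_edges_right[OF P'(1,2)] eq calculation by auto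
  ultimately show "x = x'" unfolding x by (simp add: prod_eq_iff)
qed

section \<open>Counting induced subgraphs of a sum\<close>

definition irreducible_subs :: "ograph \<Rightarrow> nat \<Rightarrow> ograph set" where
  "irreducible_subs G j = {P \<in> induced_subs G j. irreducible_og P}"

lemma finite_irreducible_subs: "finite (irreducible_subs G j)"
  unfolding irreducible_subs_def using finite_induced_subs by simp

lemma irreducible_subs_nonempty_below:
  assumes "irreducible_subs G m \<noteq> {}" "j \<le> m"
  shows "irreducible_subs G j \<noteq> {}"
proof -
  obtain H where H: "H \<in> induced_subs G m" "irreducible_og H"
    using assms(1) unfolding irreducible_subs_def by blast
  then obtain K where "K \<in> induced_subs H j" "irreducible_og K"
    using irreducible_induced_subs_all_orders induced_subs_ord_graph assms(2) by metis
  then show ?thesis using induced_subs_trans[OF H(1)] unfolding irreducible_subs_def by blast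
qed

lemma two_le_card_irreducible_subs:
  assumes "H1 \<in> induced_subs G m" "H2 \<in> induced_subs G m" "H1 \<noteq> H2"
    and "irreducible_og H1" "irreducible_og H2"
  shows "2 \<le> card (irreducible_subs G m)"
proof -
  have "{H1, H2} \<subseteq> irreducible_subs G m" using assms unfolding irreducible_subs_def by auto
  then have "card {H1, H2} \<le> card (irreducible_subs G m)"
    using card_mono finite_irreducible_subs by blast
  then show ?thesis using assms(3) by simp
qed

lemma card_irreducible_subs_0: "card (irreducible_subs G 0) \<le> 1"
proof -
  have "irreducible_subs G 0 \<subseteq> {(0, {})}"
    using induced_subs_0 unfolding irreducible_subs_def by auto
  then show ?thesis using card_mono[of "{(0, {})}" "irreducible_subs G 0"] by simp
qed

lemma card_induced_subs_osum_ge: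
  assumes "ord_graph G1" "ord_graph G2"
  shows "(\<Sum>j = 1..n. card (irreducible_subs G1 j) * card (induced_subs G2 (n - j)))
    \<le> card (induced_subs (osum G1 G2) n)"
proof -
  define D where "D = (\<Union>j\<in>{1..n}. irreducible_subs G1 j \<times> induced_subs G2 (n - j))"
  have "card D = (\<Sum>j = 1..n. card (irreducible_subs G1 j) * card (induced_subs G2 (n - j)))"
    unfolding D_def
  proof (subst card_UN_disjoint)
    show "\<forall>i\<in>{1..n}. \<forall>j\<in>{1..n}. i \<noteq> j \<longrightarrow>
        (irreducible_subs G1 i \<times> induced_subs G2 (n - i)) \<inter>
        (irreducible_subs G1 j \<times> induced_subs G2 (n - j)) = {}"
      unfolding irreducible_subs_def using induced_subs_ord_graph by blast
  qed (simp_all add: finite_irreducible_subs finite_induced_subs card_cartesian_product)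
  moreover have "D \<subseteq> {(P, Y). ord_graph P \<and> ord_graph Y \<and> irreducible_og P \<and> 1 \<le> fst P}"
    unfolding D_def irreducible_subs_def by (force dest: induced_subs_ord_graph)
  then have "inj_on (\<lambda>(P, Y). osum P Y) D" using inj_on_osum_irreducible inj_on_subset by blast
  moreover have "osum P Y \<in> induced_subs (osum G1 G2) n" if "(P, Y) \<in> D" for P Y
  proof -
    from that obtain j where "j \<le> n" "P \<in> induced_subs G1 j" "Y \<in> induced_subs G2 (n - j)"
      unfolding D_def irreducible_subs_def by auto
    then show ?thesis using osum_in_induced_subs[OF assms] by fastforce
  qed
  then have "(\<lambda>(P, Y). osum P Y) ` D \<subseteq> induced_subs (osum G1 G2) n" by auto
  ultimately show ?thesis using card_inj_on_le finite_induced_subs by metis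
qed

lemma sum_pow2_telescope:
  "r < n \<Longrightarrow> (\<Sum>j = 1..r. (2::nat) ^ (n - j - 1)) + 2 ^ (n - r - 1) = 2 ^ (n - 1)"
proof (induction r)
  case (Suc r)
  then have "n - r - 1 = Suc (n - Suc r - 1)" by auto
  then show ?case using Suc by simp
qed simp

text \<open>With truncated subtraction the bound 2 ^ (i - 1) is 1 at i = 0, matching S_0 = 1.\<close>

lemma pow2_le_weighted_sum:
  fixes c t :: "nat \<Rightarrow> nat"
  assumes "1 \<le> n" "1 \<le> m" and c: "\<And>j. 1 \<le> j \<Longrightarrow> j \<le> m \<Longrightarrow> 1 \<le> c j" "2 \<le> c m"
    and t: "\<And>i. i < n \<Longrightarrow> 2 ^ (i - 1) \<le> t i"
  shows "2 ^ (n - 1) \<le> (\<Sum>j = 1..n. c j * t (n - j))"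
proof -
  define w where "w j = (2::nat) ^ (n - j - 1)" for j
  have "(\<Sum>j = 1..n. c j * w j) \<le> (\<Sum>j = 1..n. c j * t (n - j))"
  proof (rule sum_mono)
    fix j :: nat assume "j \<in> {1..n}"
    then have "w j \<le> t (n - j)" using t[of "n - j"] unfolding w_def by simp
    then show "c j * w j \<le> c j * t (n - j)" by simp
  qed
  moreover have "2 ^ (n - 1) \<le> (\<Sum>j = 1..n. c j * w j)"
  proof (cases "n \<le> m")
    case True
    obtain r where n: "n = Suc r" using \<open>1 \<le> n\<close> by (cases n) auto
    have "2 ^ (n - 1) = (\<Sum>j = 1..r. w j) + w n"
      using sum_pow2_telescope[of r n] n by (simp add: w_def)
    also have "\<dots> = (\<Sum>j = 1..n. w j)" using n by simp
    also have "\<dots> \<le> (\<Sum>j = 1..n. c j * w j)"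
      by (rule sum_mono) (use c(1) True in auto)
    finally show ?thesis .
  next
    case False
    obtain r where m: "m = Suc r" using \<open>1 \<le> m\<close> by (cases m) auto
    have "2 ^ (n - 1) = (\<Sum>j = 1..r. w j) + 2 * w m"
      using sum_pow2_telescope[of m n] m False by (simp add: w_def)
    also have "\<dots> \<le> (\<Sum>j = 1..r. c j * w j) + c m * w m"
      using c m by (intro add_mono sum_mono mult_right_mono) auto
    also have "\<dots> = (\<Sum>j = 1..m. c j * w j)" using m by simp
    also have "\<dots> \<le> (\<Sum>j = 1..n. c j * w j)"
      using False by (intro sum_mono2) auto
    finally show ?thesis .
  qed
  ultimately show ?thesis by linarith
qed

lemma card_induced_subs_osum_list_ge:
  assumes "\<forall>G\<in>set Gs. ord_graph G \<and> (\<exists>m. 2 \<le> card (irreducible_subs G m))"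
    and "n \<le> length Gs"
  shows "2 ^ (n - 1) \<le> card (induced_subs (osum_list Gs) n)"
  using assms
proof (induction Gs arbitrary: n)
  case Nil
  then show ?case by (simp add: induced_subs_0)
next
  case (Cons G Gs)
  show ?case
  proof (cases "n = 0")
    case True
    then show ?thesis by (simp add: induced_subs_0)
  next
    case False
    obtain m where m: "2 \<le> card (irreducible_subs G m)" using Cons.prems(1) by auto
    then have "1 \<le> m" using card_irreducible_subs_0[of G] by (cases m) auto
    have "irreducible_subs G m \<noteq> {}" using m by auto
    then have "irreducible_subs G j \<noteq> {}" if "j \<le> m" for j
      using irreducible_subs_nonempty_below that by blast
    then have "1 \<le> card (irreducible_subs G j)" if "j \<le> m" for j
      using that finite_irreducible_subs by (simp add: Suc_le_eq card_gt_0_iff)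
    moreover have "2 ^ (i - 1) \<le> card (induced_subs (osum_list Gs) i)" if "i < n" for i
      using Cons.IH Cons.prems that by auto
    ultimately have "2 ^ (n - 1) \<le> (\<Sum>j = 1..n.
        card (irreducible_subs G j) * card (induced_subs (osum_list Gs) (n - j)))"
      using pow2_le_weighted_sum[of n m "\<lambda>j. card (irreducible_subs G j)"
          "\<lambda>i. card (induced_subs (osum_list Gs) i)"] \<open>1 \<le> m\<close> m False by auto
    also have "\<dots> \<le> card (induced_subs (osum_list (G # Gs)) n)"
      using card_induced_subs_osum_ge Cons.prems(1) ord_graph_osum_list
      by (simp add: osum_list_def)
    finally show ?thesis .
  qed
qed

theorem lemma17:
  fixes k :: nat and Gs :: "ograph list"
  assumes len: "length Gs = k"
    and wf: "\<forall>i < k. ord_graph (Gs ! i)"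
    and two_irr: "\<forall>i < k. \<exists>m. \<exists>H1 H2. H1 \<in> induced_subs (Gs ! i) m \<and>
                    H2 \<in> induced_subs (Gs ! i) m \<and> H1 \<noteq> H2 \<and>
                    irreducible_og H1 \<and> irreducible_og H2"
  shows "\<forall>n \<le> k. real (S_num n (osum_list Gs)) \<ge> 2 powr (real n - 1)"
proof (intro allI impI)
  fix n assume "n \<le> k"
  have "\<exists>m. 2 \<le> card (irreducible_subs (Gs ! i) m)" if "i < k" for i
    using two_irr[rule_format, OF that] two_le_card_irreducible_subs by metis
  then have "2 ^ (n - 1) \<le> S_num n (osum_list Gs)"
    using card_induced_subs_osum_list_ge[of Gs n] wf len \<open>n \<le> k\<close>
    unfolding S_num_def by (metis in_set_conv_nth)
  then have "(2::real) ^ (n - 1) \<le> real (S_num n (osum_list Gs))"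
    by (metis of_nat_le_iff of_nat_numeral of_nat_power)
  moreover have "2 powr (real n - 1) \<le> (2::real) ^ (n - 1)"
    by (cases n) (simp_all add: powr_realpow)
  ultimately show "real (S_num n (osum_list Gs)) \<ge> 2 powr (real n - 1)"
    by linarith
qed

end
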